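(* Let $n\ge 2$ and let $O_n$ be the Cuntz algebra generated by isometries $S_1,\dots,S_n$ with $\sum_{i=1}^n S_iS_i^* = 1$. Let $\phi_n$ be the unique state on $O_n$ with $\phi_n(ab)=\phi_n(ba)$ for all $a\in O_n$, $b\in F_n$. Let $\Phi_n(x)=\sum_{i=1}^n S_i x S_i^*$ and $\Psi_n(x) = \frac1n\sum_{i=1}^n S_i^* x S_i$ for $x\in O_n$. Then (i) $\phi_n\circ\Phi_n = \phi_n$; and (ii) $\Psi_n$ is the adjoint of $\Phi_n$ with respect to $\phi_n$, i.e. $\phi_n(y^*\Phi_n(x)) = \phi_n(\Psi_n(y)^* x)$ for all $x,y\in O_n$.
   Context: For a multi-index $\mu=(\mu_1,\dots,\mu_k)\in\{1,\dots,n\}^k$, $S_\mu = S_{\mu_1}\cdots S_{\mu_k}$ ($S_\emptyset=1$). $F_n$ is the norm closure of the span of all $S_\mu S_\nu^*$ with $|\mu|=|\nu|$ (the canonical UHF subalgebra of type $n^\infty$). The state $\phi_n$ extending the unique trace of $F_n$ with the stated property exists and is unique. *)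

theory Defs
  imports "HOL-Analysis.Analysis"
begin

text \<open>Unital C*-algebras, axiomatised as a type class: a unital real Banach algebra
  carrying a compatible complex scalar multiplication and an involution satisfying
  the C*-identity.\<close>

class cstar_algebra = real_normed_algebra_1 + banach +
  fixes cscale :: "complex \<Rightarrow> 'a \<Rightarrow> 'a"
    and adj :: "'a \<Rightarrow> 'a"
  assumes cscale_add_right: "cscale c (x + y) = cscale c x + cscale c y"
    and cscale_add_left: "cscale (c + d) x = cscale c x + cscale d x"
    and cscale_cscale: "cscale c (cscale d x) = cscale (c * d) x"
    and cscale_of_real: "cscale (complex_of_real r) x = scaleR r x"
    and cscale_mult_left: "cscale c x * y = cscale c (x * y)"
    and cscale_mult_right: "x * cscale c y = cscale c (x * y)"
    and norm_cscale: "norm (cscale c x) = cmod c * norm x"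
    and adj_adj: "adj (adj x) = x"
    and adj_add: "adj (x + y) = adj x + adj y"
    and adj_mult: "adj (x * y) = adj y * adj x"
    and adj_cscale: "adj (cscale c x) = cscale (cnj c) (adj x)"
    and cstar_identity: "norm (adj x * x) = (norm x)\<^sup>2"

definition complex_span :: "'a::cstar_algebra set \<Rightarrow> 'a set" where
  "complex_span B = {(\<Sum>k<(m::nat). cscale (c k) (b k)) | m c b. \<forall>k<m. b k \<in> B}"

definition cstar_gen :: "'a::cstar_algebra set \<Rightarrow> 'a set" where
  "cstar_gen G = \<Inter> {B. G \<subseteq> B \<and> 1 \<in> B \<and> closed B
      \<and> (\<forall>x\<in>B. \<forall>y\<in>B. x + y \<in> B \<and> x * y \<in> B)
      \<and> (\<forall>c. \<forall>x\<in>B. cscale c x \<in> B) \<and> (\<forall>x\<in>B. adj x \<in> B)}"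

definition word :: "(nat \<Rightarrow> 'a::cstar_algebra) \<Rightarrow> nat list \<Rightarrow> 'a" where
  "word S \<mu> = foldr (\<lambda>i acc. S i * acc) \<mu> 1"

definition cuntz_alg :: "nat \<Rightarrow> (nat \<Rightarrow> 'a::cstar_algebra) \<Rightarrow> 'a set" where
  "cuntz_alg n S = cstar_gen (S ` {1..n})"

definition uhf_alg :: "nat \<Rightarrow> (nat \<Rightarrow> 'a::cstar_algebra) \<Rightarrow> 'a set" where
  "uhf_alg n S = closure (complex_span {word S \<mu> * adj (word S \<nu>) | \<mu> \<nu>.
      length \<mu> = length \<nu> \<and> set \<mu> \<subseteq> {1..n} \<and> set \<nu> \<subseteq> {1..n}})"

definition cuntz_family :: "nat \<Rightarrow> (nat \<Rightarrow> 'a::cstar_algebra) \<Rightarrow> bool" where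
  "cuntz_family n S \<longleftrightarrow> (\<forall>i\<in>{1..n}. adj (S i) * S i = 1)
      \<and> (\<Sum>i=1..n. S i * adj (S i)) = 1"

definition is_state_on :: "'a::cstar_algebra set \<Rightarrow> ('a \<Rightarrow> complex) \<Rightarrow> bool" where
  "is_state_on A \<phi> \<longleftrightarrow>
     (\<forall>x\<in>A. \<forall>y\<in>A. \<phi> (x + y) = \<phi> x + \<phi> y)
   \<and> (\<forall>c. \<forall>x\<in>A. \<phi> (cscale c x) = c * \<phi> x)
   \<and> (\<forall>x\<in>A. Im (\<phi> (adj x * x)) = 0 \<and> 0 \<le> Re (\<phi> (adj x * x)))
   \<and> \<phi> 1 = 1"

definition Phi_map :: "nat \<Rightarrow> (nat \<Rightarrow> 'a::cstar_algebra) \<Rightarrow> 'a \<Rightarrow> 'a" where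
  "Phi_map n S x = (\<Sum>i=1..n. S i * x * adj (S i))"

definition Psi_map :: "nat \<Rightarrow> (nat \<Rightarrow> 'a::cstar_algebra) \<Rightarrow> 'a \<Rightarrow> 'a" where
  "Psi_map n S x = cscale (1 / of_nat n) (\<Sum>i=1..n. adj (S i) * x * S i)"

end

theory Submission
  imports Defs "HOL-Computational_Algebra.Formal_Power_Series"
begin

text \<open>The heart of the matter is \<open>\<phi>(S\<^sub>j x S\<^sub>j\<^sup>*) = \<phi>(x)/n\<close> for all \<open>x\<close> in \<open>O\<^sub>n\<close>. Summing over \<open>j\<close>
  gives (i); and since \<open>S\<^sub>i S\<^sub>i\<^sup>*\<close> lies in \<open>F\<^sub>n\<close>, the trace property turns \<open>\<phi>(a S\<^sub>i\<^sup>*)\<close> into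
  \<open>\<phi>(S\<^sub>i S\<^sub>i\<^sup>* a S\<^sub>i\<^sup>*) = \<phi>(S\<^sub>i\<^sup>* a)/n\<close>, which is (ii).

  States are contractive, so both sides of the key identity are continuous linear functionals and
  it suffices to check it on the monomials \<open>S\<^sub>\<mu> S\<^sub>\<nu>\<^sup>*\<close>, whose span is dense. There \<open>\<phi>\<close> is forced
  by the trace property. The \<open>n\<^sup>k\<close> projections \<open>S\<^sub>\<mu> S\<^sub>\<mu>\<^sup>*\<close> with \<open>|\<mu>| = k\<close> are conjugate in \<open>F\<^sub>n\<close> and
  sum to 1, so each has weight \<open>n\<^sup>-\<^sup>k\<close>. For \<open>\<mu> \<noteq> \<nu>\<close>, either the relations \<open>S\<^sub>i\<^sup>* S\<^sub>m = 0\<close> kill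
  \<open>\<phi>(S\<^sub>\<mu> S\<^sub>\<nu>\<^sup>*)\<close>, or the monomial is \<open>S\<^sub>\<nu> S\<^sub>\<rho> S\<^sub>\<nu>\<^sup>*\<close> with \<open>\<rho>\<close> nonempty; then the trace property
  lets \<open>\<nu>\<close> be replaced by \<open>\<nu>\<rho>\<close> over and over, while \<open>|\<phi>(S\<^sub>w y S\<^sub>w\<^sup>*)| \<le> n\<^sup>-\<^sup>|\<^sup>w\<^sup>| \<parallel>y\<parallel>\<close>, so the
  value is 0.\<close>

section \<open>Elementary facts about C*-algebras\<close>

lemma cscale_one [simp]: "cscale 1 (x::'a::cstar_algebra) = x"
  using cscale_of_real[of 1 x] by simp

lemma cscale_zero_left [simp]: "cscale 0 (x::'a::cstar_algebra) = 0"
  using cscale_of_real[of 0 x] by simp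

lemma cscale_minus_one: "cscale (-1) (x::'a::cstar_algebra) = - x"
  using cscale_of_real[of "-1" x] by simp

lemma adj_zero [simp]: "adj (0::'a::cstar_algebra) = 0"
  using adj_add[of 0 0] by simp

lemma adj_one [simp]: "adj (1::'a::cstar_algebra) = 1"
  by (metis adj_adj adj_mult mult_1_left)

lemma adj_scaleR: "adj (r *\<^sub>R x) = r *\<^sub>R adj (x::'a::cstar_algebra)"
  by (metis adj_cscale cscale_of_real complex_cnj_complex_of_real)

lemma adj_sum: "adj (sum f I) = (\<Sum>i\<in>I. adj (f i :: 'a::cstar_algebra))"
  by (induction I rule: infinite_finite_induct) (auto simp: adj_add)

lemma adj_power: "adj ((x::'a::cstar_algebra) ^ m) = adj x ^ m"
  by (induction m) (simp_all add: adj_mult power_commutes)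

lemma norm_le_norm_adj: "norm (x::'a::cstar_algebra) \<le> norm (adj x)"
proof (cases "x = 0")
  case False
  have "norm x * norm x = norm (adj x * x)"
    by (simp add: cstar_identity power2_eq_square)
  also have "\<dots> \<le> norm (adj x) * norm x"
    by (rule norm_mult_ineq)
  finally show ?thesis
    using False by simp
qed simp

lemma norm_adj [simp]: "norm (adj x) = norm (x::'a::cstar_algebra)"
  using norm_le_norm_adj[of x] norm_le_norm_adj[of "adj x"] by (simp add: adj_adj)

lemma norm_isometry: "adj s * s = 1 \<Longrightarrow> norm (s::'a::cstar_algebra) = 1"
  using cstar_identity[of s] norm_ge_zero[of s] by (auto simp: power2_eq_1_iff)

lemma bounded_linear_adj: "bounded_linear (adj :: 'a::cstar_algebra \<Rightarrow> 'a)"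
  by (rule bounded_linear_intro[where K=1]) (auto simp: adj_add adj_scaleR)

lemma bounded_linear_cscale: "bounded_linear (cscale c :: 'a::cstar_algebra \<Rightarrow> 'a)"
proof (rule bounded_linear_intro[where K="cmod c"])
  fix r x
  have "cscale c (r *\<^sub>R x) = cscale (complex_of_real r) (cscale c x)"
    by (simp add: cscale_cscale mult.commute flip: cscale_of_real)
  then show "cscale c (r *\<^sub>R x) = r *\<^sub>R cscale c x"
    by (simp add: cscale_of_real)
qed (auto simp: cscale_add_right norm_cscale mult.commute)


section \<open>Positive functionals on *-subalgebras\<close>

definition star_subalgebra :: "'a::cstar_algebra set \<Rightarrow> bool" where
  "star_subalgebra A \<longleftrightarrow> 1 \<in> A \<and> (\<forall>x\<in>A. \<forall>y\<in>A. x + y \<in> A \<and> x * y \<in> A)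
     \<and> (\<forall>c. \<forall>x\<in>A. cscale c x \<in> A) \<and> (\<forall>x\<in>A. adj x \<in> A)"

definition linear_functional_on :: "'a::cstar_algebra set \<Rightarrow> ('a \<Rightarrow> complex) \<Rightarrow> bool" where
  "linear_functional_on A \<omega> \<longleftrightarrow> (\<forall>x\<in>A. \<forall>y\<in>A. \<omega> (x + y) = \<omega> x + \<omega> y)
     \<and> (\<forall>c. \<forall>x\<in>A. \<omega> (cscale c x) = c * \<omega> x)"

definition positive_functional :: "'a::cstar_algebra set \<Rightarrow> ('a \<Rightarrow> complex) \<Rightarrow> bool" where
  "positive_functional A \<omega> \<longleftrightarrow> linear_functional_on A \<omega>
     \<and> (\<forall>x\<in>A. Im (\<omega> (adj x * x)) = 0 \<and> 0 \<le> Re (\<omega> (adj x * x)))"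

lemma is_state_on_iff: "is_state_on A \<omega> \<longleftrightarrow> positive_functional A \<omega> \<and> \<omega> 1 = 1"
  unfolding is_state_on_def positive_functional_def linear_functional_on_def by blast

lemma star_subalgebraD:
  assumes "star_subalgebra A"
  shows "1 \<in> A" and "x \<in> A \<Longrightarrow> y \<in> A \<Longrightarrow> x + y \<in> A" and "x \<in> A \<Longrightarrow> y \<in> A \<Longrightarrow> x * y \<in> A"
    and "x \<in> A \<Longrightarrow> cscale c x \<in> A" and "x \<in> A \<Longrightarrow> adj x \<in> A"
  using assms unfolding star_subalgebra_def by auto

lemma star_subalgebra_zero: "star_subalgebra A \<Longrightarrow> 0 \<in> A"
  using star_subalgebraD(4)[of A 1 0] star_subalgebraD(1)[of A] by simp

lemma star_subalgebra_minus: "star_subalgebra A \<Longrightarrow> x \<in> A \<Longrightarrow> - x \<in> A"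
  using star_subalgebraD(4)[of A x "-1"] by (simp add: cscale_minus_one)

lemma star_subalgebra_diff: "star_subalgebra A \<Longrightarrow> x \<in> A \<Longrightarrow> y \<in> A \<Longrightarrow> x - y \<in> A"
  using star_subalgebraD(2) star_subalgebra_minus by (metis diff_conv_add_uminus)

lemma star_subalgebra_scaleR: "star_subalgebra A \<Longrightarrow> x \<in> A \<Longrightarrow> r *\<^sub>R x \<in> A"
  using star_subalgebraD(4)[of A x "complex_of_real r"] by (simp add: cscale_of_real)

lemma star_subalgebra_sum:
  "star_subalgebra A \<Longrightarrow> (\<And>i. i \<in> I \<Longrightarrow> f i \<in> A) \<Longrightarrow> sum f I \<in> A"
  by (induction I rule: infinite_finite_induct) (auto simp: star_subalgebra_zero star_subalgebraD(2))

lemma star_subalgebra_power: "star_subalgebra A \<Longrightarrow> x \<in> A \<Longrightarrow> x ^ m \<in> A"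
  by (induction m) (auto simp: star_subalgebraD(1,3))

lemma linear_functional_onD:
  assumes "linear_functional_on A \<omega>"
  shows "x \<in> A \<Longrightarrow> y \<in> A \<Longrightarrow> \<omega> (x + y) = \<omega> x + \<omega> y"
    and "x \<in> A \<Longrightarrow> \<omega> (cscale c x) = c * \<omega> x"
  using assms unfolding linear_functional_on_def by auto

lemma positive_functionalD:
  assumes "positive_functional A \<omega>"
  shows "linear_functional_on A \<omega>"
    and "x \<in> A \<Longrightarrow> Im (\<omega> (adj x * x)) = 0"
    and "x \<in> A \<Longrightarrow> 0 \<le> Re (\<omega> (adj x * x))"
  using assms unfolding positive_functional_def by auto

context
  fixes A :: "'a::cstar_algebra set" and \<omega> :: "'a \<Rightarrow> complex"
  assumes A: "star_subalgebra A" and \<omega>: "linear_functional_on A \<omega>"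
begin

lemma linear_functional_zero: "\<omega> 0 = 0"
  using linear_functional_onD(2)[OF \<omega> star_subalgebra_zero[OF A], of 0] by simp

lemma linear_functional_minus: "x \<in> A \<Longrightarrow> \<omega> (- x) = - \<omega> x"
  using linear_functional_onD(2)[OF \<omega>, of x "-1"] by (simp add: cscale_minus_one)

lemma linear_functional_diff: "x \<in> A \<Longrightarrow> y \<in> A \<Longrightarrow> \<omega> (x - y) = \<omega> x - \<omega> y"
  using linear_functional_onD(1)[OF \<omega> _ star_subalgebra_minus[OF A]] linear_functional_minus
  by (metis diff_conv_add_uminus)

lemma linear_functional_scaleR: "x \<in> A \<Longrightarrow> \<omega> (r *\<^sub>R x) = of_real r * \<omega> x"
  using linear_functional_onD(2)[OF \<omega>, of x "complex_of_real r"] by (simp add: cscale_of_real)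

lemma linear_functional_sum:
  "(\<And>i. i \<in> I \<Longrightarrow> f i \<in> A) \<Longrightarrow> \<omega> (sum f I) = (\<Sum>i\<in>I. \<omega> (f i))"
  by (induction I rule: infinite_finite_induct)
    (auto simp: linear_functional_zero linear_functional_onD(1)[OF \<omega>] star_subalgebra_sum[OF A])

end

lemma adj_add_cscale_mult:
  "adj (v + cscale t u) * (v + cscale t u) =
     adj v * v + cscale t (adj v * u) + cscale (cnj t) (adj u * v) + cscale (cnj t * t) (adj u * (u::'a::cstar_algebra))"
proof -
  have "adj (v + cscale t u) * (v + cscale t u) =
     adj v * v + adj v * cscale t u + (cscale (cnj t) (adj u) * v + cscale (cnj t) (adj u) * cscale t u)"
    by (simp add: adj_add adj_cscale distrib_left distrib_right)
  also have "\<dots> = adj v * v + cscale t (adj v * u) + (cscale (cnj t) (adj u * v) + cscale (cnj t * t) (adj u * u))"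
    by (simp only: cscale_mult_left cscale_mult_right cscale_cscale mult.commute)
  finally show ?thesis by (simp only: add.assoc)
qed

context
  fixes A :: "'a::cstar_algebra set" and \<omega> :: "'a \<Rightarrow> complex"
  assumes A: "star_subalgebra A" and \<omega>: "positive_functional A \<omega>"
begin

lemma positive_functional_adj_add_cscale_mult:
  assumes "u \<in> A" "v \<in> A"
  shows "\<omega> (adj (v + cscale t u) * (v + cscale t u)) =
     \<omega> (adj v * v) + t * \<omega> (adj v * u) + cnj t * \<omega> (adj u * v) + (cnj t * t) * \<omega> (adj u * u)"
  using assms A unfolding adj_add_cscale_mult
  by (simp add: linear_functional_onD[OF positive_functionalD(1)[OF \<omega>]] star_subalgebraD)

lemma positive_functional_adj:
  assumes b: "b \<in> A"
  shows "\<omega> (adj b) = cnj (\<omega> b)"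
proof -
  have one: "1 \<in> A" using A by (rule star_subalgebraD)
  have real: "Im (\<omega> (adj x * x)) = 0" if "x \<in> A" for x
    using positive_functionalD(2)[OF \<omega> that] .
  have "Im (\<omega> (adj (1 + cscale t b) * (1 + cscale t b))) = 0" for t
    using b one A by (intro real) (auto intro: star_subalgebraD)
  then have "Im (\<omega> 1 + t * \<omega> b + cnj t * \<omega> (adj b) + (cnj t * t) * \<omega> (adj b * b)) = 0" for t
    by (simp only: positive_functional_adj_add_cscale_mult[OF b one] adj_one mult_1_left mult_1_right)
  from this[of 1] this[of \<i>] real[OF one] real[OF b]
  show ?thesis
    by (simp add: complex_eq_iff)
qed

text \<open>The quadratic in \<open>s\<close> below is \<open>\<omega>((v + t u)\<^sup>* (v + t u)) \<ge> 0\<close> for \<open>t = - s \<omega>(u\<^sup>* v)\<close>.\<close>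

lemma positive_functional_quadratic:
  assumes "u \<in> A" "v \<in> A"
  shows "0 \<le> Re (\<omega> (adj v * v)) - 2 * s * (cmod (\<omega> (adj u * v)))\<^sup>2
     + s\<^sup>2 * (cmod (\<omega> (adj u * v)))\<^sup>2 * Re (\<omega> (adj u * u))"
proof -
  define w where "w = \<omega> (adj u * v)"
  define t where "t = - (complex_of_real s * w)"
  have vu: "\<omega> (adj v * u) = cnj w"
    using positive_functional_adj[of "adj u * v"] assms A
    by (simp add: w_def adj_mult adj_adj star_subalgebraD)
  have "0 \<le> Re (\<omega> (adj (v + cscale t u) * (v + cscale t u)))"
    using assms A by (intro positive_functionalD(3)[OF \<omega>]) (auto intro: star_subalgebraD)
  also have "\<omega> (adj (v + cscale t u) * (v + cscale t u)) =
     \<omega> (adj v * v) + t * cnj w + cnj t * w + (cnj t * t) * \<omega> (adj u * u)"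
    using positive_functional_adj_add_cscale_mult[OF assms] vu w_def by simp
  also have "t * cnj w = - of_real (s * (cmod w)\<^sup>2)"
    using complex_norm_square[of w] by (simp add: t_def mult.assoc del: of_real_power)
  also have "cnj t * w = - of_real (s * (cmod w)\<^sup>2)"
    using complex_norm_square[of w] by (simp add: t_def mult.commute mult.left_commute del: of_real_power)
  also have "cnj t * t = of_real (s\<^sup>2 * (cmod w)\<^sup>2)"
    using complex_norm_square[of w]
    by (simp add: t_def power2_eq_square mult.commute mult.left_commute del: of_real_power)
  finally show ?thesis by (simp add: w_def)
qed

lemma positive_functional_cauchy_schwarz:
  assumes u: "u \<in> A" and v: "v \<in> A"
  shows "(cmod (\<omega> (adj u * v)))\<^sup>2 \<le> Re (\<omega> (adj u * u)) * Re (\<omega> (adj v * v))"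
proof -
  define w where "w = (cmod (\<omega> (adj u * v)))\<^sup>2"
  define a where "a = Re (\<omega> (adj u * u))"
  define c where "c = Re (\<omega> (adj v * v))"
  have q: "0 \<le> c - 2 * s * w + s\<^sup>2 * w * a" for s
    using positive_functional_quadratic[OF u v, of s] by (simp add: w_def a_def c_def)
  have "w \<ge> 0" "a \<ge> 0" "c \<ge> 0"
    using positive_functionalD(3)[OF \<omega>] u v by (auto simp: w_def a_def c_def)
  show ?thesis
  proof (cases "a = 0")
    case True
    have "w \<le> 0"
      using q[of "(c + 1) / (2 * w)"] True \<open>c \<ge> 0\<close> \<open>w \<ge> 0\<close>
      by (cases "w = 0") (simp_all add: field_simps)
    then show ?thesis using \<open>w \<ge> 0\<close> True by (simp add: w_def flip: a_def)
  next
    case False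
    with \<open>a \<ge> 0\<close> have "0 \<le> c - w / a"
      using q[of "1 / a"] by (simp add: power2_eq_square field_simps)
    then show ?thesis using False \<open>a \<ge> 0\<close> by (simp add: w_def a_def c_def field_simps)
  qed
qed

lemma positive_functional_null:
  assumes "u \<in> A" "v \<in> A" "\<omega> (adj v * v) = 0"
  shows "\<omega> (adj u * v) = 0"
  using positive_functional_cauchy_schwarz[OF assms(1,2)] assms(3) by simp

end


section \<open>States are contractive\<close>

lemma abs_half_gchoose_le_one: "\<bar>(1/2::real) gchoose m\<bar> \<le> 1"
proof (induction m)
  case (Suc m)
  have "(1/2::real) * ((1/2) gchoose m) = of_nat m * ((1/2) gchoose m) + of_nat (Suc m) * ((1/2) gchoose (Suc m))"
    by (rule gbinomial_mult_1)
  then have e: "(1/2::real) gchoose (Suc m) = (1/2 - real m) / real (Suc m) * ((1/2) gchoose m)"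
    by (simp add: field_simps)
  have "\<bar>(1/2 - real m) / real (Suc m)\<bar> \<le> 1" by (simp add: field_simps)
  then have "\<bar>(1/2 - real m) / real (Suc m)\<bar> * \<bar>(1/2::real) gchoose m\<bar> \<le> 1 * 1"
    using Suc by (intro mult_mono) auto
  then show ?case by (simp add: e abs_mult)
qed simp

text \<open>The square root of \<open>1 - u\<close> is the binomial series \<open>\<Sum>\<^sub>m (-1)\<^sup>m (1/2 gchoose m) u\<^sup>m\<close>;
  its Cauchy square is \<open>\<Sum>\<^sub>m (-1)\<^sup>m (1 gchoose m) u\<^sup>m = 1 - u\<close> by Vandermonde's identity.\<close>

lemma exists_selfadjoint_sqrt_one_minus:
  fixes u :: "'a::cstar_algebra"
  assumes A: "star_subalgebra A" "closed A" and u: "u \<in> A" "adj u = u" "norm u < 1"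
  shows "\<exists>k\<in>A. adj k = k \<and> k * k = 1 - u"
proof -
  define c where "c m = (-1)^m * ((1/2::real) gchoose m)" for m
  define f where "f m = c m *\<^sub>R u ^ m" for m
  have nf: "norm (f m) \<le> norm u ^ m" for m
  proof -
    have "norm (f m) = \<bar>c m\<bar> * norm (u ^ m)" by (simp add: f_def)
    also have "\<dots> \<le> 1 * norm u ^ m"
      using abs_half_gchoose_le_one[of m] norm_power_ineq[of u m]
      by (intro mult_mono) (auto simp: c_def abs_mult)
    finally show ?thesis by simp
  qed
  have sn: "summable (\<lambda>m. norm (f m))"
    by (rule summable_comparison_test[where g="\<lambda>m. norm u ^ m"])
       (use nf u in \<open>auto intro!: summable_geometric\<close>)
  define k where "k = suminf f"
  have lim: "(\<lambda>N. \<Sum>m<N. f m) \<longlonglongrightarrow> k"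
    unfolding k_def by (rule summable_LIMSEQ[OF summable_norm_cancel[OF sn]])
  have "f m \<in> A" for m
    unfolding f_def by (intro star_subalgebra_scaleR star_subalgebra_power A u)
  then have kA: "k \<in> A"
    by (intro closed_sequentially[OF A(2) _ lim]) (auto intro!: star_subalgebra_sum A)
  have "(\<lambda>N. adj (\<Sum>m<N. f m)) \<longlonglongrightarrow> adj k"
    by (rule bounded_linear.tendsto[OF bounded_linear_adj lim])
  then have "(\<lambda>N. \<Sum>m<N. f m) \<longlonglongrightarrow> adj k"
    by (simp add: adj_sum f_def adj_scaleR adj_power u)
  then have ka: "adj k = k" using lim LIMSEQ_unique by blast
  have cauchy: "(\<lambda>m. \<Sum>i\<le>m. f i * f (m - i)) sums (k * k)"
    unfolding k_def by (rule Cauchy_product_sums[OF sn sn])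
  have cauchy_term: "(\<Sum>i\<le>m. f i * f (m - i)) = ((-1)^m * ((1::real) gchoose m)) *\<^sub>R u ^ m" for m
  proof -
    have "(\<Sum>i\<le>m. f i * f (m - i)) = (\<Sum>i\<le>m. c i * c (m - i)) *\<^sub>R u ^ m"
      by (simp add: f_def scaleR_sum_left power_add[symmetric] mult.commute)
    also have "(\<Sum>i\<le>m. c i * c (m - i)) = (-1)^m * (\<Sum>i\<le>m. ((1/2::real) gchoose i) * ((1/2) gchoose (m - i)))"
      unfolding sum_distrib_left c_def
      by (rule sum.cong) (auto simp: power_add[symmetric] mult_ac)
    also have "(\<Sum>i\<le>m. ((1/2::real) gchoose i) * ((1/2) gchoose (m - i))) = (1::real) gchoose m"
      using gbinomial_Vandermonde[of "1/2::real" "1/2" m] by (simp add: atLeast0AtMost)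
    finally show ?thesis .
  qed
  have "(1::real) gchoose m = (if m = 0 then 1 else if m = 1 then 1 else 0)" for m
    using binomial_gbinomial[of 1 m, where 'a=real] by (cases m) (auto simp: binomial_eq_0)
  then have "(\<lambda>m. ((-1)^m * ((1::real) gchoose m)) *\<^sub>R u ^ m) = (\<lambda>m. if m \<in> {0,1} then ((-1)^m) *\<^sub>R u ^ m else 0)"
    by auto
  moreover have "(\<lambda>m. if m \<in> {0,1} then ((-1)^m) *\<^sub>R u ^ m else 0) sums (\<Sum>m\<in>{0::nat,1}. ((-1)^m) *\<^sub>R u ^ m)"
    by (rule sums_If_finite_set) simp
  ultimately have "(\<lambda>m. \<Sum>i\<le>m. f i * f (m - i)) sums (1 - u)"
    unfolding cauchy_term by simp
  then have "k * k = 1 - u" using cauchy by (metis sums_unique2)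
  then show ?thesis using kA ka by blast
qed

text \<open>If \<open>\<bar>\<omega> x\<bar> > r > \<parallel>x\<parallel>\<close>, then \<open>u = (x/r)\<^sup>* (x/r)\<close> has norm \<open>< 1\<close>, so \<open>1 - u = k\<^sup>* k\<close> and
  \<open>\<bar>\<omega> (x/r)\<bar>\<^sup>2 \<le> \<omega> u \<le> 1\<close> by Cauchy--Schwarz, a contradiction.\<close>

lemma state_norm_le:
  assumes A: "star_subalgebra A" "closed A" and \<omega>: "positive_functional A \<omega>" "\<omega> 1 = 1"
    and x: "x \<in> A"
  shows "cmod (\<omega> x) \<le> norm x"
proof (rule ccontr)
  have lin: "linear_functional_on A \<omega>" by (rule positive_functionalD(1)[OF \<omega>(1)])
  assume "\<not> cmod (\<omega> x) \<le> norm x"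
  define r where "r = (norm x + cmod (\<omega> x)) / 2"
  have r: "norm x < r" "r < cmod (\<omega> x)"
    using \<open>\<not> cmod (\<omega> x) \<le> norm x\<close> unfolding r_def by auto
  have "0 < r"
    using r norm_ge_zero[of x] by linarith
  define y where "y = (1 / r) *\<^sub>R x"
  have yA: "y \<in> A" unfolding y_def by (rule star_subalgebra_scaleR[OF A(1) x])
  define u where "u = adj y * y"
  have uA: "u \<in> A" unfolding u_def using A yA by (auto intro!: star_subalgebraD)
  have "norm y < 1" using r \<open>0 < r\<close> by (simp add: y_def field_simps)
  then have "norm u < 1" by (simp add: u_def cstar_identity power_less_one_iff)
  then obtain k where kA: "k \<in> A" and "adj k = k" "k * k = 1 - u"
    using exists_selfadjoint_sqrt_one_minus[OF A uA] by (auto simp: u_def adj_mult adj_adj)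
  then have "\<omega> (adj k * k) = 1 - \<omega> u"
    using linear_functional_diff[OF A(1) lin star_subalgebraD(1)[OF A(1)] uA] \<omega>(2) by simp
  then have "Re (\<omega> u) \<le> 1"
    using positive_functionalD(3)[OF \<omega>(1) kA] by simp
  moreover have "(cmod (\<omega> y))\<^sup>2 \<le> Re (\<omega> u)"
    using positive_functional_cauchy_schwarz[OF A(1) \<omega>(1) star_subalgebraD(1)[OF A(1)] yA] \<omega>(2)
    by (simp add: u_def)
  ultimately have "(cmod (\<omega> y))\<^sup>2 \<le> 1"
    by simp
  then have "cmod (\<omega> y) \<le> 1"
    by (simp add: power_le_one_iff abs_le_iff power2_le_iff_abs_le)
  moreover have "cmod (\<omega> y) = cmod (\<omega> x) / r"
    using linear_functional_scaleR[OF A(1) lin x] \<open>0 < r\<close> by (simp add: y_def norm_mult norm_divide)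
  ultimately show False using r \<open>0 < r\<close> by (simp add: field_simps)
qed

lemma state_continuous_on:
  assumes A: "star_subalgebra A" "closed A" and \<omega>: "positive_functional A \<omega>" "\<omega> 1 = 1"
  shows "continuous_on A \<omega>"
  unfolding continuous_on_iff dist_norm
proof (intro ballI allI impI)
  fix x e assume x: "x \<in> A" and "(0::real) < e"
  have "cmod (\<omega> y - \<omega> x) \<le> norm (y - x)" if "y \<in> A" for y
    using state_norm_le[OF A \<omega> star_subalgebra_diff[OF A(1) that x]]
      linear_functional_diff[OF A(1) positive_functionalD(1)[OF \<omega>(1)] that x] by simp
  then show "\<exists>d>0. \<forall>y\<in>A. norm (y - x) < d \<longrightarrow> norm (\<omega> y - \<omega> x) < e"
    using \<open>0 < e\<close> by (metis le_less_trans)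
qed


section \<open>Generated C*-algebras\<close>

lemma star_subalgebra_cstar_gen: "star_subalgebra (cstar_gen G)"
  unfolding star_subalgebra_def cstar_gen_def by (intro conjI ballI allI) auto

lemma closed_cstar_gen: "closed (cstar_gen G)"
  unfolding cstar_gen_def by (rule closed_Inter) blast

lemma generators_subset_cstar_gen: "G \<subseteq> cstar_gen G"
  unfolding cstar_gen_def by blast

lemma cstar_gen_minimal:
  assumes "G \<subseteq> B" "star_subalgebra B" "closed B"
  shows "cstar_gen G \<subseteq> B"
  using assms unfolding star_subalgebra_def cstar_gen_def by (intro Inter_lower) auto

inductive_set monomials :: "'a::cstar_algebra set \<Rightarrow> 'a set" for G where
  monomials_one: "1 \<in> monomials G"
| monomials_gen: "x \<in> monomials G \<Longrightarrow> g \<in> G \<Longrightarrow> g * x \<in> monomials G"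
| monomials_adj_gen: "x \<in> monomials G \<Longrightarrow> g \<in> G \<Longrightarrow> adj g * x \<in> monomials G"

text \<open>An inductive variant of \<open>complex_span\<close>, suited to proofs by induction.\<close>

inductive_set cspan :: "'a::cstar_algebra set \<Rightarrow> 'a set" for X where
  cspan_zero: "0 \<in> cspan X"
| cspan_base: "x \<in> X \<Longrightarrow> x \<in> cspan X"
| cspan_add: "x \<in> cspan X \<Longrightarrow> y \<in> cspan X \<Longrightarrow> x + y \<in> cspan X"
| cspan_cscale: "x \<in> cspan X \<Longrightarrow> cscale c x \<in> cspan X"

lemma monomials_mult: "x \<in> monomials G \<Longrightarrow> y \<in> monomials G \<Longrightarrow> x * y \<in> monomials G"
  by (induction rule: monomials.induct) (auto simp: mult.assoc intro: monomials.intros)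

lemma monomials_adj: "x \<in> monomials G \<Longrightarrow> adj x \<in> monomials G"
proof (induction rule: monomials.induct)
  case (monomials_gen x g)
  then show ?case
    using monomials_mult[OF _ monomials_adj_gen[OF monomials_one]] by (simp add: adj_mult)
next
  case (monomials_adj_gen x g)
  then show ?case
    using monomials_mult[OF _ monomials_gen[OF monomials_one]] by (simp add: adj_mult adj_adj)
qed (simp add: monomials_one)

lemma monomials_subset_cstar_gen: "monomials G \<subseteq> cstar_gen G"
proof
  fix x assume "x \<in> monomials G"
  then show "x \<in> cstar_gen G"
  proof induction
    case monomials_one
    show ?case by (rule star_subalgebraD(1)[OF star_subalgebra_cstar_gen])
  next
    case (monomials_gen x g)
    then show ?case
      using generators_subset_cstar_gen star_subalgebraD(3)[OF star_subalgebra_cstar_gen] by blast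
  next
    case (monomials_adj_gen x g)
    then show ?case
      using generators_subset_cstar_gen star_subalgebraD(3,5)[OF star_subalgebra_cstar_gen] by blast
  qed
qed

lemma cspan_subset:
  assumes "X \<subseteq> B" "star_subalgebra B"
  shows "cspan X \<subseteq> B"
proof
  fix x assume "x \<in> cspan X"
  then show "x \<in> B"
    by induction (use assms star_subalgebraD[OF assms(2)] star_subalgebra_zero[OF assms(2)] in auto)
qed

lemma cspan_mult:
  assumes X: "\<And>x y. x \<in> X \<Longrightarrow> y \<in> X \<Longrightarrow> x * y \<in> X"
    and x: "x \<in> cspan X" and y: "y \<in> cspan X"
  shows "x * y \<in> cspan X"
proof -
  have left: "a * z \<in> cspan X" if "a \<in> X" "z \<in> cspan X" for a z
    using that(2)
    by induction (auto simp: distrib_left cscale_mult_right X[OF that(1)] intro: cspan.intros)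
  from x show ?thesis
    by induction (auto simp: distrib_right cscale_mult_left left[OF _ y] intro: cspan.intros)
qed

lemma cspan_adj:
  assumes "\<And>x. x \<in> X \<Longrightarrow> adj x \<in> X" and "x \<in> cspan X"
  shows "adj x \<in> cspan X"
  using assms(2) by induction (auto simp: adj_add adj_cscale assms(1) intro: cspan.intros)

lemma closure_closed_under:
  assumes "\<And>x. x \<in> T \<Longrightarrow> f x \<in> closure T" "continuous_on UNIV f" "x \<in> closure T"
  shows "f x \<in> closure T"
  using image_closure_subset[OF continuous_on_subset[OF assms(2) subset_UNIV] closed_closure, of T]
    assms(1,3) by blast

lemma closure_closed_under2:
  assumes "\<And>x y. x \<in> T \<Longrightarrow> y \<in> T \<Longrightarrow> f x y \<in> T"
    and "\<And>x. continuous_on UNIV (f x)" "\<And>y. continuous_on UNIV (\<lambda>x. f x y)"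
    and "x \<in> closure T" "y \<in> closure T"
  shows "f x y \<in> closure T"
proof -
  have "f x' y \<in> closure T" if "x' \<in> T" for x'
    by (rule closure_closed_under[where f="f x'", OF _ assms(2) assms(5)])
      (use assms(1) that closure_subset in blast)
  then show ?thesis
    by (rule closure_closed_under[where f="\<lambda>x. f x y", OF _ assms(3) assms(4)])
qed

lemma star_subalgebra_closure_cspan_monomials:
  "star_subalgebra (closure (cspan (monomials G)))"
  unfolding star_subalgebra_def
proof (intro conjI ballI allI)
  show "1 \<in> closure (cspan (monomials G))"
    using closure_subset cspan_base[OF monomials_one] by blast
  fix x y assume x: "x \<in> closure (cspan (monomials G))" and y: "y \<in> closure (cspan (monomials G))"
  show "x + y \<in> closure (cspan (monomials G))"
    by (rule closure_closed_under2[where f="(+)", OF cspan_add _ _ x y]) (auto intro!: continuous_intros)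
  show "x * y \<in> closure (cspan (monomials G))"
    by (rule closure_closed_under2[where f="(*)", OF cspan_mult[OF monomials_mult] _ _ x y])
      (auto intro!: continuous_intros)
next
  fix c x assume x: "x \<in> closure (cspan (monomials G))"
  show "cscale c x \<in> closure (cspan (monomials G))"
    by (rule closure_closed_under[OF _ linear_continuous_on[OF bounded_linear_cscale] x])
      (rule subsetD[OF closure_subset], rule cspan_cscale)
next
  fix x assume x: "x \<in> closure (cspan (monomials G))"
  show "adj x \<in> closure (cspan (monomials G))"
    by (rule closure_closed_under[OF _ linear_continuous_on[OF bounded_linear_adj] x])
      (rule subsetD[OF closure_subset], rule cspan_adj[OF monomials_adj])
qed

lemma cstar_gen_subset_closure_cspan_monomials: "cstar_gen G \<subseteq> closure (cspan (monomials G))"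
proof (rule cstar_gen_minimal[OF _ star_subalgebra_closure_cspan_monomials closed_closure])
  show "G \<subseteq> closure (cspan (monomials G))"
    using monomials_gen[OF monomials_one] cspan_base closure_subset by fastforce
qed

lemma linear_functionals_eq_on_cstar_gen:
  assumes f: "linear_functional_on (cstar_gen G) f" "continuous_on (cstar_gen G) f"
    and g: "linear_functional_on (cstar_gen G) g" "continuous_on (cstar_gen G) g"
    and eq: "\<And>m. m \<in> monomials G \<Longrightarrow> f m = g m"
    and x: "x \<in> cstar_gen G"
  shows "f x = g x"
proof -
  define Z where "Z = {x \<in> cstar_gen G. f x - g x = 0}"
  have "closed Z"
    unfolding Z_def
    by (intro continuous_closed_preimage_constant closed_cstar_gen continuous_intros f g)
  have "cspan (monomials G) \<subseteq> cstar_gen G"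
    by (intro cspan_subset monomials_subset_cstar_gen star_subalgebra_cstar_gen)
  moreover have "x \<in> cspan (monomials G) \<Longrightarrow> f x = g x" for x
  proof (induction rule: cspan.induct)
    case (cspan_add x y)
    then have "x \<in> cstar_gen G" "y \<in> cstar_gen G"
      using \<open>cspan (monomials G) \<subseteq> cstar_gen G\<close> by auto
    then show ?case
      using cspan_add.IH by (simp add: linear_functional_onD(1)[OF f(1)] linear_functional_onD(1)[OF g(1)])
  next
    case (cspan_cscale x c)
    then have "x \<in> cstar_gen G"
      using \<open>cspan (monomials G) \<subseteq> cstar_gen G\<close> by auto
    then show ?case
      using cspan_cscale.IH by (simp add: linear_functional_onD(2)[OF f(1)] linear_functional_onD(2)[OF g(1)])
  qed (simp_all add: eq linear_functional_zero[OF star_subalgebra_cstar_gen f(1)]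
      linear_functional_zero[OF star_subalgebra_cstar_gen g(1)])
  ultimately have "cspan (monomials G) \<subseteq> Z"
    by (auto simp: Z_def)
  then have "closure (cspan (monomials G)) \<subseteq> Z"
    by (rule closure_minimal) fact
  then show ?thesis
    using cstar_gen_subset_closure_cspan_monomials x by (auto simp: Z_def)
qed


section \<open>Cuntz algebras with a tracial state on the UHF core\<close>

lemma word_Nil [simp]: "word S [] = 1"
  by (simp add: word_def)

lemma word_Cons [simp]: "word S (i # \<mu>) = S i * word S \<mu>"
  by (simp add: word_def)

lemma word_append: "word S (\<mu> @ \<nu>) = word S \<mu> * word S \<nu>"
  by (induction \<mu>) (simp_all add: mult.assoc)

locale cuntz_trace_state =
  fixes n :: nat and S :: "nat \<Rightarrow> 'a::cstar_algebra" and \<phi> :: "'a \<Rightarrow> complex"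
  assumes two_le_n: "2 \<le> n"
    and cuntz: "cuntz_family n S"
    and state: "is_state_on (cuntz_alg n S) \<phi>"
    and trace: "\<forall>a\<in>cuntz_alg n S. \<forall>b\<in>uhf_alg n S. \<phi> (a * b) = \<phi> (b * a)"
begin

abbreviation On :: "'a set" where "On \<equiv> cuntz_alg n S"

lemma star_subalgebra_On: "star_subalgebra On"
  unfolding cuntz_alg_def by (rule star_subalgebra_cstar_gen)

lemma closed_On: "closed On"
  unfolding cuntz_alg_def by (rule closed_cstar_gen)

lemmas one_mem = star_subalgebraD(1)[OF star_subalgebra_On]
  and mult_mem = star_subalgebraD(3)[OF star_subalgebra_On]
  and adj_mem = star_subalgebraD(5)[OF star_subalgebra_On]

lemma S_mem: "i \<in> {1..n} \<Longrightarrow> S i \<in> On"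
  unfolding cuntz_alg_def by (rule subsetD[OF generators_subset_cstar_gen imageI])

lemma word_mem: "set \<mu> \<subseteq> {1..n} \<Longrightarrow> word S \<mu> \<in> On"
  by (induction \<mu>) (auto intro!: mult_mem S_mem one_mem)

lemmas On_intros = one_mem mult_mem adj_mem S_mem word_mem

lemma phi_positive: "positive_functional On \<phi>" and phi_one: "\<phi> 1 = 1"
  using state by (simp_all add: is_state_on_iff)

lemma phi_linear: "linear_functional_on On \<phi>"
  by (rule positive_functionalD(1)[OF phi_positive])

lemmas phi_add = linear_functional_onD(1)[OF phi_linear]
  and phi_cscale = linear_functional_onD(2)[OF phi_linear]
  and phi_zero = linear_functional_zero[OF star_subalgebra_On phi_linear]
  and phi_sum = linear_functional_sum[OF star_subalgebra_On phi_linear]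
  and phi_adj = positive_functional_adj[OF star_subalgebra_On phi_positive]

lemma phi_continuous: "continuous_on On \<phi>"
  by (rule state_continuous_on[OF star_subalgebra_On closed_On phi_positive phi_one])

lemma phi_commute: "a \<in> On \<Longrightarrow> b \<in> uhf_alg n S \<Longrightarrow> \<phi> (a * b) = \<phi> (b * a)"
  using trace by blast

lemma adj_S_mult_S: "i \<in> {1..n} \<Longrightarrow> adj (S i) * S i = 1"
  using cuntz unfolding cuntz_family_def by blast

lemma sum_S_mult_adj_S: "(\<Sum>i=1..n. S i * adj (S i)) = 1"
  using cuntz unfolding cuntz_family_def by blast

lemma adj_word_mult_word: "set \<mu> \<subseteq> {1..n} \<Longrightarrow> adj (word S \<mu>) * word S \<mu> = 1"
proof (induction \<mu>)
  case (Cons i \<mu>)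
  have "adj (word S (i # \<mu>)) * word S (i # \<mu>) = adj (word S \<mu>) * (adj (S i) * S i) * word S \<mu>"
    by (simp add: adj_mult mult.assoc)
  then show ?case using Cons by (simp add: adj_S_mult_S)
qed simp

lemma norm_word: "set \<mu> \<subseteq> {1..n} \<Longrightarrow> norm (word S \<mu>) = 1"
  by (rule norm_isometry[OF adj_word_mult_word])

lemma word_mult_adj_word_mem_uhf:
  assumes "length \<mu> = length \<nu>" "set \<mu> \<subseteq> {1..n}" "set \<nu> \<subseteq> {1..n}"
  shows "word S \<mu> * adj (word S \<nu>) \<in> uhf_alg n S"
proof -
  let ?x = "word S \<mu> * adj (word S \<nu>)"
  have "?x \<in> complex_span {word S \<mu> * adj (word S \<nu>) | \<mu> \<nu>.
      length \<mu> = length \<nu> \<and> set \<mu> \<subseteq> {1..n} \<and> set \<nu> \<subseteq> {1..n}}"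
    unfolding complex_span_def
    by (rule CollectI, rule exI[of _ 1], rule exI[of _ "\<lambda>_. 1"], rule exI[of _ "\<lambda>_. ?x"])
      (use assms in auto)
  then show ?thesis unfolding uhf_alg_def using closure_subset by blast
qed


text \<open>The relations \<open>S\<^sub>i\<^sup>* S\<^sub>m = 0\<close> for \<open>i \<noteq> m\<close> hold in every C*-algebra, but their proof needs
  positivity of sums \<open>\<Sum> x\<^sub>l\<^sup>* x\<^sub>l\<close>, i.e.\ spectral theory. We only need them as seen by \<open>\<phi>\<close>, where
  positivity of \<open>\<phi>\<close> replaces spectral theory: two elements are identified if no context
  \<open>a \<cdot> b\<close> lets \<open>\<phi>\<close> tell them apart.\<close>

definition phi_equiv :: "'a \<Rightarrow> 'a \<Rightarrow> bool" where
  "phi_equiv x y \<longleftrightarrow> x \<in> On \<and> y \<in> On \<and> (\<forall>a\<in>On. \<forall>b\<in>On. \<phi> (a * x * b) = \<phi> (a * y * b))"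

lemma phi_equivD: "phi_equiv x y \<Longrightarrow> a \<in> On \<Longrightarrow> b \<in> On \<Longrightarrow> \<phi> (a * x * b) = \<phi> (a * y * b)"
  unfolding phi_equiv_def by blast

lemma phi_equiv_phi: "phi_equiv x y \<Longrightarrow> \<phi> x = \<phi> y"
  using phi_equivD[of x y 1 1] one_mem by simp

lemma phi_equiv_refl: "x \<in> On \<Longrightarrow> phi_equiv x x"
  unfolding phi_equiv_def by blast

lemma phi_equiv_trans: "phi_equiv x y \<Longrightarrow> phi_equiv y z \<Longrightarrow> phi_equiv x z"
  unfolding phi_equiv_def by simp

lemma phi_equiv_mult_left:
  assumes c: "c \<in> On" and xy: "phi_equiv x y"
  shows "phi_equiv (c * x) (c * y)"
  unfolding phi_equiv_def
proof (intro conjI ballI)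
  show "c * x \<in> On" "c * y \<in> On"
    using c xy mult_mem unfolding phi_equiv_def by auto
  fix a b assume "a \<in> On" "b \<in> On"
  then show "\<phi> (a * (c * x) * b) = \<phi> (a * (c * y) * b)"
    using phi_equivD[OF xy, of "a * c" b] c mult_mem by (simp add: mult.assoc)
qed

lemma phi_equiv_mult_right:
  assumes c: "c \<in> On" and xy: "phi_equiv x y"
  shows "phi_equiv (x * c) (y * c)"
  unfolding phi_equiv_def
proof (intro conjI ballI)
  show "x * c \<in> On" "y * c \<in> On"
    using c xy mult_mem unfolding phi_equiv_def by auto
  fix a b assume "a \<in> On" "b \<in> On"
  then show "\<phi> (a * (x * c) * b) = \<phi> (a * (y * c) * b)"
    using phi_equivD[OF xy, of a "c * b"] c mult_mem by (simp add: mult.assoc)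
qed

text \<open>With \<open>z\<^sub>l = S\<^sub>l\<^sup>* S\<^sub>m b\<close>, the Cuntz relations give
  \<open>\<Sum>\<^bsub>l \<noteq> m\<^esub> z\<^sub>l\<^sup>* z\<^sub>l = b\<^sup>* S\<^sub>m\<^sup>* (1 - S\<^sub>m S\<^sub>m\<^sup>*) S\<^sub>m b = 0\<close>; by positivity every \<open>\<phi>(z\<^sub>l\<^sup>* z\<^sub>l)\<close>
  vanishes, and Cauchy--Schwarz kills \<open>\<phi>(a z\<^sub>i)\<close>.\<close>

lemma adj_S_mult_S_phi_equiv_zero:
  assumes i: "i \<in> {1..n}" and m: "m \<in> {1..n}" and "i \<noteq> m"
  shows "phi_equiv (adj (S i) * S m) 0"
  unfolding phi_equiv_def
proof (intro conjI ballI)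
  show "adj (S i) * S m \<in> On" "0 \<in> On"
    using i m by (auto intro!: On_intros star_subalgebra_zero[OF star_subalgebra_On])
  fix a b assume a: "a \<in> On" and b: "b \<in> On"
  define z where "z l = adj (S l) * S m * b" for l
  define L where "L = {1..n} - {m}"
  have zA: "z l \<in> On" if "l \<in> {1..n}" for l
    using that m b by (auto simp: z_def intro!: On_intros)
  have "S m * adj (S m) + (\<Sum>l\<in>L. S l * adj (S l)) = 1"
    using sum.remove[of "{1..n}" m "\<lambda>l. S l * adj (S l)"] m sum_S_mult_adj_S by (simp add: L_def)
  then have sum_L: "(\<Sum>l\<in>L. S l * adj (S l)) = 1 - S m * adj (S m)"
    by (metis add_diff_cancel_left')
  have "adj (S m) * (1 - S m * adj (S m)) * S m = adj (S m) * S m - (adj (S m) * S m) * (adj (S m) * S m)"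
    by (simp add: algebra_simps)
  then have middle: "adj (S m) * (\<Sum>l\<in>L. S l * adj (S l)) * S m = 0"
    by (simp add: sum_L adj_S_mult_S[OF m])
  have "(\<Sum>l\<in>L. adj (z l) * z l) = adj b * (adj (S m) * (\<Sum>l\<in>L. S l * adj (S l)) * S m) * b"
    by (simp add: z_def adj_mult adj_adj sum_distrib_left sum_distrib_right mult.assoc)
  also have "\<dots> = 0"
    by (simp add: middle)
  finally have "(\<Sum>l\<in>L. Re (\<phi> (adj (z l) * z l))) = 0"
    using phi_sum[of L "\<lambda>l. adj (z l) * z l"] zA by (simp add: L_def phi_zero adj_mem mult_mem flip: Re_sum)
  moreover have "\<forall>l\<in>L. 0 \<le> Re (\<phi> (adj (z l) * z l))"
    using positive_functionalD(3)[OF phi_positive] zA by (auto simp: L_def)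
  ultimately have "Re (\<phi> (adj (z i) * z i)) = 0"
    using sum_nonneg_eq_0_iff[of L "\<lambda>l. Re (\<phi> (adj (z l) * z l))"] i \<open>i \<noteq> m\<close>
    by (simp add: L_def)
  then have "\<phi> (adj (z i) * z i) = 0"
    using positive_functionalD(2)[OF phi_positive zA[OF i]] by (simp add: complex_eq_iff)
  then have "\<phi> (adj (adj a) * z i) = 0"
    by (rule positive_functional_null[OF star_subalgebra_On phi_positive adj_mem[OF a] zA[OF i]])
  then show "\<phi> (a * (adj (S i) * S m) * b) = \<phi> (a * 0 * b)"
    by (simp add: adj_adj z_def mult.assoc phi_zero)
qed


lemma adj_word_mult_word_phi_equiv_zero:
  assumes "set \<nu> \<subseteq> {1..n}" "set \<mu> \<subseteq> {1..n}" "length \<nu> \<le> length \<mu>" "take (length \<nu>) \<mu> \<noteq> \<nu>"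
  shows "phi_equiv (adj (word S \<nu>) * word S \<mu>) 0"
  using assms
proof (induction \<nu> arbitrary: \<mu>)
  case (Cons i \<nu>)
  then obtain j \<mu>' where \<mu>: "\<mu> = j # \<mu>'"
    by (cases \<mu>) auto
  have i: "i \<in> {1..n}" and j: "j \<in> {1..n}" and \<nu>: "set \<nu> \<subseteq> {1..n}" and \<mu>': "set \<mu>' \<subseteq> {1..n}"
    using Cons.prems \<mu> by auto
  have split: "adj (word S (i # \<nu>)) * word S \<mu> = adj (word S \<nu>) * (adj (S i) * S j * word S \<mu>')"
    by (simp add: \<mu> adj_mult mult.assoc)
  show ?case
  proof (cases "i = j")
    case True
    have "take (length \<nu>) \<mu>' \<noteq> \<nu>" "length \<nu> \<le> length \<mu>'"
      using Cons.prems True by (auto simp: \<mu>)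
    then show ?thesis
      using Cons.IH[OF \<nu> \<mu>'] unfolding split by (simp add: True adj_S_mult_S[OF j])
  next
    case False
    have "phi_equiv (adj (S i) * S j * word S \<mu>') (0 * word S \<mu>')"
      by (rule phi_equiv_mult_right[OF word_mem[OF \<mu>'] adj_S_mult_S_phi_equiv_zero[OF i j False]])
    then have "phi_equiv (adj (word S \<nu>) * (adj (S i) * S j * word S \<mu>')) (adj (word S \<nu>) * (0 * word S \<mu>'))"
      by (rule phi_equiv_mult_left[OF adj_mem[OF word_mem[OF \<nu>]]])
    then show ?thesis
      unfolding split by simp
  qed
qed simp

lemma monomial_phi_equiv_normal_form:
  assumes "x \<in> monomials (S ` {1..n})"
  shows "(\<exists>\<mu> \<nu>. set \<mu> \<subseteq> {1..n} \<and> set \<nu> \<subseteq> {1..n} \<and> phi_equiv x (word S \<mu> * adj (word S \<nu>)))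
    \<or> phi_equiv x 0"
  using assms
proof induction
  case monomials_one
  have "phi_equiv 1 (word S [] * adj (word S []))"
    by (simp add: phi_equiv_refl one_mem)
  then show ?case
    by (intro disjI1 exI[of _ "[]"]) simp
next
  case (monomials_gen x g)
  then obtain i where i: "i \<in> {1..n}" "g = S i"
    by blast
  from monomials_gen.IH show ?case
  proof (elim disjE exE conjE)
    fix \<mu> \<nu> assume \<mu>\<nu>: "set \<mu> \<subseteq> {1..n}" "set \<nu> \<subseteq> {1..n}" "phi_equiv x (word S \<mu> * adj (word S \<nu>))"
    have "phi_equiv (g * x) (word S (i # \<mu>) * adj (word S \<nu>))"
      using phi_equiv_mult_left[OF S_mem[OF i(1)] \<mu>\<nu>(3)] by (simp add: i(2) mult.assoc)
    then show ?thesis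
      using \<mu>\<nu> i by (intro disjI1 exI[of _ "i # \<mu>"] exI[of _ \<nu>]) auto
  next
    assume "phi_equiv x 0"
    then have "phi_equiv (S i * x) (S i * 0)"
      by (rule phi_equiv_mult_left[OF S_mem[OF i(1)]])
    then have "phi_equiv (g * x) 0"
      by (simp add: i(2))
    then show ?thesis ..
  qed
next
  case (monomials_adj_gen x g)
  then obtain i where i: "i \<in> {1..n}" "g = S i"
    by blast
  from monomials_adj_gen.IH show ?case
  proof (elim disjE exE conjE)
    fix \<mu> \<nu> assume \<mu>\<nu>: "set \<mu> \<subseteq> {1..n}" "set \<nu> \<subseteq> {1..n}" "phi_equiv x (word S \<mu> * adj (word S \<nu>))"
    have gx: "phi_equiv (adj g * x) (adj (word S [i]) * word S \<mu> * adj (word S \<nu>))"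
      using phi_equiv_mult_left[OF adj_mem[OF S_mem[OF i(1)]] \<mu>\<nu>(3)] by (simp add: i(2) mult.assoc)
    show ?thesis
    proof (cases "take 1 \<mu> = [i]")
      case True
      then obtain \<mu>' where \<mu>: "\<mu> = i # \<mu>'"
        by (cases \<mu>) auto
      have "adj (word S [i]) * word S \<mu> = word S \<mu>'"
        by (simp add: \<mu> adj_S_mult_S[OF i(1)] flip: mult.assoc)
      then have "phi_equiv (adj g * x) (word S \<mu>' * adj (word S \<nu>))"
        using gx by simp
      then show ?thesis
        using \<mu>\<nu> \<mu> by (intro disjI1 exI[of _ \<mu>'] exI[of _ \<nu>]) simp
    next
      case False
      show ?thesis
      proof (cases \<mu>)
        case Nil
        then have "phi_equiv (adj g * x) (word S [] * adj (word S (\<nu> @ [i])))"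
          using gx by (simp add: word_append adj_mult)
        then show ?thesis
          using \<mu>\<nu> i by (intro disjI1 exI[of _ "[]"] exI[of _ "\<nu> @ [i]"]) simp
      next
        case (Cons j \<mu>')
        have "phi_equiv (adj (word S [i]) * word S \<mu> * adj (word S \<nu>)) (0 * adj (word S \<nu>))"
          using False \<mu>\<nu> i Cons
          by (intro phi_equiv_mult_right adj_word_mult_word_phi_equiv_zero On_intros) auto
        then show ?thesis
          using phi_equiv_trans[OF gx] by simp
      qed
    qed
  next
    assume "phi_equiv x 0"
    then have "phi_equiv (adj (S i) * x) (adj (S i) * 0)"
      by (rule phi_equiv_mult_left[OF adj_mem[OF S_mem[OF i(1)]]])
    then have "phi_equiv (adj g * x) 0"
      by (simp add: i(2))
    then show ?thesis ..
  qed
qed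


definition words_of_length :: "nat \<Rightarrow> nat list set" where
  "words_of_length N = {\<alpha>. set \<alpha> \<subseteq> {1..n} \<and> length \<alpha> = N}"

definition proj :: "nat list \<Rightarrow> 'a" where
  "proj \<alpha> = word S \<alpha> * adj (word S \<alpha>)"

lemma finite_words_of_length: "finite (words_of_length N)"
  unfolding words_of_length_def by (rule finite_lists_length_eq) simp

lemma card_words_of_length: "card (words_of_length N) = n ^ N"
  unfolding words_of_length_def using card_lists_length_eq[of "{1..n}" N] by simp

lemma words_of_length_Suc:
  "words_of_length (Suc N) = (\<lambda>(i, \<alpha>). i # \<alpha>) ` ({1..n} \<times> words_of_length N)"
  unfolding words_of_length_def by (auto simp: length_Suc_conv image_iff)

lemma proj_mem: "set \<alpha> \<subseteq> {1..n} \<Longrightarrow> proj \<alpha> \<in> On"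
  unfolding proj_def by (intro On_intros)

lemma proj_mem_uhf: "set \<alpha> \<subseteq> {1..n} \<Longrightarrow> proj \<alpha> \<in> uhf_alg n S"
  unfolding proj_def by (rule word_mult_adj_word_mem_uhf) auto

lemma sum_proj_words_of_length: "(\<Sum>\<alpha>\<in>words_of_length N. proj \<alpha>) = 1"
proof (induction N)
  case 0
  have "words_of_length 0 = {[]}"
    unfolding words_of_length_def by auto
  then show ?case
    by (simp add: proj_def)
next
  case (Suc N)
  have "inj_on (\<lambda>(i, \<alpha>). i # \<alpha>) ({1..n} \<times> words_of_length N)"
    by (auto simp: inj_on_def)
  then have "(\<Sum>\<alpha>\<in>words_of_length (Suc N). proj \<alpha>) = (\<Sum>(i, \<alpha>)\<in>{1..n} \<times> words_of_length N. proj (i # \<alpha>))"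
    unfolding words_of_length_Suc by (subst sum.reindex) (simp_all add: case_prod_beta')
  also have "\<dots> = (\<Sum>i=1..n. S i * (\<Sum>\<alpha>\<in>words_of_length N. proj \<alpha>) * adj (S i))"
    by (simp add: sum.cartesian_product[symmetric] proj_def adj_mult mult.assoc sum_distrib_left
        sum_distrib_right)
  finally show ?case
    using Suc sum_S_mult_adj_S by simp
qed

lemma phi_proj:
  assumes "set \<alpha> \<subseteq> {1..n}"
  shows "\<phi> (proj \<alpha>) = 1 / of_nat n ^ length \<alpha>"
proof -
  let ?W = "words_of_length (length \<alpha>)"
  have "\<phi> (proj \<beta>) = \<phi> (proj \<alpha>)" if "\<beta> \<in> ?W" for \<beta>
  proof -
    have \<beta>: "set \<beta> \<subseteq> {1..n}" "length \<beta> = length \<alpha>"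
      using that by (auto simp: words_of_length_def)
    have "\<phi> ((word S \<beta> * adj (word S \<alpha>)) * (word S \<alpha> * adj (word S \<beta>))) =
          \<phi> ((word S \<alpha> * adj (word S \<beta>)) * (word S \<beta> * adj (word S \<alpha>)))"
      using assms \<beta> by (intro phi_commute On_intros word_mult_adj_word_mem_uhf) auto
    moreover have "(word S \<beta> * adj (word S \<alpha>)) * (word S \<alpha> * adj (word S \<beta>)) = proj \<beta>"
      using adj_word_mult_word[OF assms] by (simp add: proj_def mult.assoc[symmetric]) (simp add: mult.assoc)
    moreover have "(word S \<alpha> * adj (word S \<beta>)) * (word S \<beta> * adj (word S \<alpha>)) = proj \<alpha>"
      using adj_word_mult_word[OF \<beta>(1)] by (simp add: proj_def mult.assoc[symmetric]) (simp add: mult.assoc)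
    ultimately show ?thesis
      by simp
  qed
  then have "(\<Sum>\<beta>\<in>?W. \<phi> (proj \<beta>)) = (\<Sum>\<beta>\<in>?W. \<phi> (proj \<alpha>))"
    by (rule sum.cong[OF refl])
  moreover have "(\<Sum>\<beta>\<in>?W. \<phi> (proj \<beta>)) = 1"
    using phi_sum[of ?W proj] proj_mem phi_one sum_proj_words_of_length
    by (simp add: words_of_length_def)
  ultimately have "1 = (\<Sum>\<beta>\<in>?W. \<phi> (proj \<alpha>))"
    by simp
  also have "\<dots> = of_nat n ^ length \<alpha> * \<phi> (proj \<alpha>)"
    by (simp add: card_words_of_length)
  finally show ?thesis
    using two_le_n by (simp add: field_simps)
qed


lemma phi_word_mult_proj:
  assumes \<beta>: "set \<beta> \<subseteq> {1..n}" and z: "z \<in> On"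
  shows "\<phi> (word S \<beta> * z) = \<phi> (word S \<beta> * z * proj \<beta>)"
proof -
  let ?W = "words_of_length (length \<beta>)"
  have \<beta>W: "\<beta> \<in> ?W"
    using \<beta> by (simp add: words_of_length_def)
  have off_diagonal: "\<phi> (word S \<beta> * z * proj \<alpha>) = 0" if "\<alpha> \<in> ?W" "\<alpha> \<noteq> \<beta>" for \<alpha>
  proof -
    have \<alpha>: "set \<alpha> \<subseteq> {1..n}" "length \<alpha> = length \<beta>"
      using that by (auto simp: words_of_length_def)
    have "\<phi> (word S \<beta> * z * proj \<alpha>) = \<phi> (proj \<alpha> * (word S \<beta> * z))"
      using \<beta> z \<alpha> by (intro phi_commute proj_mem_uhf On_intros)
    also have "\<dots> = \<phi> (word S \<alpha> * (adj (word S \<alpha>) * word S \<beta>) * z)"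
      by (simp add: proj_def mult.assoc)
    also have "\<dots> = \<phi> (word S \<alpha> * 0 * z)"
      using \<alpha> \<beta> z that(2)
      by (intro phi_equivD adj_word_mult_word_phi_equiv_zero On_intros) auto
    finally show ?thesis
      by (simp add: phi_zero)
  qed
  have "\<phi> (word S \<beta> * z) = \<phi> (\<Sum>\<alpha>\<in>?W. word S \<beta> * z * proj \<alpha>)"
    by (simp add: sum_proj_words_of_length flip: sum_distrib_left)
  also have "\<dots> = (\<Sum>\<alpha>\<in>?W. \<phi> (word S \<beta> * z * proj \<alpha>))"
    by (rule phi_sum) (use \<beta> z in \<open>auto simp: words_of_length_def intro!: mult_mem word_mem proj_mem\<close>)
  also have "\<dots> = \<phi> (word S \<beta> * z * proj \<beta>)"
    using off_diagonal by (simp add: sum.remove[OF finite_words_of_length \<beta>W])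
  finally show ?thesis .
qed

lemma norm_phi_conj_word_le:
  assumes \<alpha>: "set \<alpha> \<subseteq> {1..n}" and y: "y \<in> On"
  shows "cmod (\<phi> (word S \<alpha> * y * adj (word S \<alpha>))) \<le> norm y / real n ^ length \<alpha>"
proof -
  define \<omega> where "\<omega> x = of_nat n ^ length \<alpha> * \<phi> (word S \<alpha> * x * adj (word S \<alpha>))" for x
  have mem: "word S \<alpha> * x * adj (word S \<alpha>) \<in> On" if "x \<in> On" for x
    using \<alpha> that by (intro On_intros)
  have "linear_functional_on On \<omega>"
    unfolding linear_functional_on_def
  proof (intro conjI ballI allI)
    fix x y assume "x \<in> On" "y \<in> On"
    moreover have "word S \<alpha> * (x + y) * adj (word S \<alpha>) =
        word S \<alpha> * x * adj (word S \<alpha>) + word S \<alpha> * y * adj (word S \<alpha>)"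
      by (simp add: distrib_left distrib_right)
    ultimately show "\<omega> (x + y) = \<omega> x + \<omega> y"
      by (simp add: \<omega>_def phi_add mem distrib_left)
  next
    fix c x assume "x \<in> On"
    moreover have "word S \<alpha> * cscale c x * adj (word S \<alpha>) = cscale c (word S \<alpha> * x * adj (word S \<alpha>))"
      by (simp add: cscale_mult_left cscale_mult_right)
    ultimately show "\<omega> (cscale c x) = c * \<omega> x"
      by (simp add: \<omega>_def phi_cscale mem)
  qed
  moreover have "word S \<alpha> * (adj x * x) * adj (word S \<alpha>) = adj (x * adj (word S \<alpha>)) * (x * adj (word S \<alpha>))" for x
    by (simp add: adj_mult adj_adj mult.assoc)
  then have "\<forall>x\<in>On. Im (\<omega> (adj x * x)) = 0 \<and> 0 \<le> Re (\<omega> (adj x * x))"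
    using positive_functionalD(2,3)[OF phi_positive] \<alpha> by (simp add: \<omega>_def On_intros)
  moreover have "\<omega> 1 = 1"
    using phi_proj[OF \<alpha>] two_le_n by (simp add: \<omega>_def proj_def)
  ultimately have "cmod (\<omega> y) \<le> norm y"
    by (intro state_norm_le[OF star_subalgebra_On closed_On _ _ y]) (simp_all add: positive_functional_def)
  then show ?thesis
    using two_le_n by (simp add: \<omega>_def norm_mult norm_power field_simps)
qed

lemma phi_conj_word_append:
  assumes w: "set w \<subseteq> {1..n}" and \<rho>: "set \<rho> \<subseteq> {1..n}"
  shows "\<phi> (word S w * word S \<rho> * adj (word S w)) =
    \<phi> (word S (w @ \<rho>) * word S \<rho> * adj (word S (w @ \<rho>)))"
proof -
  have "\<phi> (word S w * word S \<rho> * adj (word S w)) = \<phi> (word S (w @ \<rho>) * adj (word S w))"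
    by (simp add: word_append)
  also have "\<dots> = \<phi> (word S (w @ \<rho>) * adj (word S w) * proj (w @ \<rho>))"
    using w \<rho> by (intro phi_word_mult_proj On_intros) auto
  also have "word S (w @ \<rho>) * adj (word S w) * proj (w @ \<rho>) =
      word S (w @ \<rho>) * (adj (word S w) * word S w) * word S \<rho> * adj (word S (w @ \<rho>))"
    by (simp add: proj_def word_append mult.assoc)
  finally show ?thesis
    by (simp add: adj_word_mult_word[OF w])
qed

lemma phi_conj_word_eq_zero:
  assumes "\<rho> \<noteq> []" and \<nu>: "set \<nu> \<subseteq> {1..n}" and \<rho>: "set \<rho> \<subseteq> {1..n}"
  shows "\<phi> (word S \<nu> * word S \<rho> * adj (word S \<nu>)) = 0"
proof -
  have bound: "cmod (\<phi> (word S \<nu> * word S \<rho> * adj (word S \<nu>))) \<le> 1 / real n ^ (length \<nu> + m)"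
    if "set \<nu> \<subseteq> {1..n}" for \<nu> m
    using that
  proof (induction m arbitrary: \<nu>)
    case 0
    then show ?case
      using norm_phi_conj_word_le[OF 0 word_mem[OF \<rho>]] by (simp add: norm_word[OF \<rho>])
  next
    case (Suc m)
    have "cmod (\<phi> (word S \<nu> * word S \<rho> * adj (word S \<nu>))) \<le> 1 / real n ^ (length (\<nu> @ \<rho>) + m)"
      using Suc.IH[of "\<nu> @ \<rho>"] Suc.prems \<rho> by (simp add: phi_conj_word_append[OF Suc.prems \<rho>])
    also have "\<dots> \<le> 1 / real n ^ (length \<nu> + Suc m)"
      using \<open>\<rho> \<noteq> []\<close> two_le_n
      by (intro divide_left_mono power_increasing) (auto simp: Suc_le_eq)
    finally show ?case .
  qed
  show ?thesis
  proof (rule ccontr)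
    assume "\<phi> (word S \<nu> * word S \<rho> * adj (word S \<nu>)) \<noteq> 0"
    then obtain m where "(1 / real n) ^ m < cmod (\<phi> (word S \<nu> * word S \<rho> * adj (word S \<nu>)))"
      using real_arch_pow_inv[of _ "1 / real n"] two_le_n by fastforce
    moreover have "1 / real n ^ (length \<nu> + m) \<le> (1 / real n) ^ m"
      unfolding power_one_over using two_le_n by (intro divide_left_mono power_increasing) auto
    ultimately show False
      using bound[OF \<nu>, of m] by simp
  qed
qed

lemma phi_word_mult_adj_word:
  assumes \<mu>: "set \<mu> \<subseteq> {1..n}" and \<nu>: "set \<nu> \<subseteq> {1..n}"
  shows "\<phi> (word S \<mu> * adj (word S \<nu>)) = (if \<mu> = \<nu> then 1 / of_nat n ^ length \<mu> else 0)"
proof -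
  have off_diagonal: "\<phi> (word S \<mu> * adj (word S \<nu>)) = 0"
    if "set \<mu> \<subseteq> {1..n}" "set \<nu> \<subseteq> {1..n}" "length \<nu> \<le> length \<mu>" "\<mu> \<noteq> \<nu>" for \<mu> \<nu>
  proof (cases "take (length \<nu>) \<mu> = \<nu>")
    case True
    then obtain \<rho> where "\<mu> = \<nu> @ \<rho>" "\<rho> \<noteq> []"
      using \<open>\<mu> \<noteq> \<nu>\<close> by (metis append_take_drop_id self_append_conv)
    then show ?thesis
      using phi_conj_word_eq_zero[of \<rho> \<nu>] that by (simp add: word_append)
  next
    case False
    have "\<phi> (word S \<mu> * adj (word S \<nu>)) = \<phi> (word S \<mu> * adj (word S \<nu>) * proj \<mu>)"
      using that by (intro phi_word_mult_proj On_intros)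
    also have "\<dots> = \<phi> (word S \<mu> * (adj (word S \<nu>) * word S \<mu>) * adj (word S \<mu>))"
      by (simp add: proj_def mult.assoc)
    also have "\<dots> = \<phi> (word S \<mu> * 0 * adj (word S \<mu>))"
      using that False by (intro phi_equivD adj_word_mult_word_phi_equiv_zero On_intros)
    finally show ?thesis
      by (simp add: phi_zero)
  qed
  show ?thesis
  proof (cases "\<mu> = \<nu>")
    case True
    then show ?thesis
      using phi_proj[OF \<mu>] by (simp add: proj_def)
  next
    case False
    show ?thesis
    proof (cases "length \<nu> \<le> length \<mu>")
      case True
      then show ?thesis using off_diagonal[OF \<mu> \<nu> _ False] False by simp
    next
      case le: False
      have "\<phi> (adj (word S \<mu> * adj (word S \<nu>))) = cnj (\<phi> (word S \<mu> * adj (word S \<nu>)))"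
        using \<mu> \<nu> by (intro phi_adj On_intros)
      then show ?thesis
        using off_diagonal[OF \<nu> \<mu>] False le by (simp add: adj_mult adj_adj)
    qed
  qed
qed


lemma phi_conj_S:
  assumes j: "j \<in> {1..n}" and x: "x \<in> On"
  shows "\<phi> (S j * x * adj (S j)) = \<phi> x / of_nat n"
proof -
  define f where "f y = of_nat n * \<phi> (S j * y * adj (S j))" for y
  have mem: "S j * y * adj (S j) \<in> On" if "y \<in> On" for y
    using j that by (intro On_intros)
  have "linear_functional_on On f"
    unfolding linear_functional_on_def
  proof (intro conjI ballI allI)
    fix y z assume "y \<in> On" "z \<in> On"
    moreover have "S j * (y + z) * adj (S j) = S j * y * adj (S j) + S j * z * adj (S j)"
      by (simp add: distrib_left distrib_right)
    ultimately show "f (y + z) = f y + f z"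
      by (simp add: f_def phi_add mem distrib_left)
  next
    fix c y assume "y \<in> On"
    moreover have "S j * cscale c y * adj (S j) = cscale c (S j * y * adj (S j))"
      by (simp add: cscale_mult_left cscale_mult_right)
    ultimately show "f (cscale c y) = c * f y"
      by (simp add: f_def phi_cscale mem)
  qed
  moreover have "continuous_on On f"
    unfolding f_def
    by (intro continuous_intros continuous_on_compose2[OF phi_continuous]) (auto simp: mem j S_mem)
  moreover have "f m = \<phi> m" if "m \<in> monomials (S ` {1..n})" for m
    using monomial_phi_equiv_normal_form[OF that]
  proof (elim disjE exE conjE)
    fix \<mu> \<nu> assume \<mu>\<nu>: "set \<mu> \<subseteq> {1..n}" "set \<nu> \<subseteq> {1..n}" "phi_equiv m (word S \<mu> * adj (word S \<nu>))"
    have "f (word S \<mu> * adj (word S \<nu>)) = of_nat n * \<phi> (word S (j # \<mu>) * adj (word S (j # \<nu>)))"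
      by (simp add: f_def adj_mult mult.assoc)
    also have "\<dots> = \<phi> (word S \<mu> * adj (word S \<nu>))"
    proof -
      have j\<mu>\<nu>: "set (j # \<mu>) \<subseteq> {1..n}" "set (j # \<nu>) \<subseteq> {1..n}"
        using j \<mu>\<nu> by auto
      show ?thesis
        unfolding phi_word_mult_adj_word[OF \<mu>\<nu>(1,2)] phi_word_mult_adj_word[OF j\<mu>\<nu>]
        using two_le_n by simp
    qed
    finally have "f (word S \<mu> * adj (word S \<nu>)) = \<phi> (word S \<mu> * adj (word S \<nu>))" .
    then show ?thesis
      using phi_equivD[OF \<mu>\<nu>(3) S_mem[OF j] adj_mem[OF S_mem[OF j]]] phi_equiv_phi[OF \<mu>\<nu>(3)]
      by (simp add: f_def)
  next
    assume "phi_equiv m 0"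
    then show ?thesis
      using phi_equivD[of m 0, OF _ S_mem[OF j] adj_mem[OF S_mem[OF j]]] phi_equiv_phi[of m 0]
      by (simp add: f_def phi_zero)
  qed
  ultimately have "f x = \<phi> x"
    using linear_functionals_eq_on_cstar_gen[of "S ` {1..n}" f \<phi>] phi_linear phi_continuous x
    unfolding cuntz_alg_def by blast
  then show ?thesis
    using two_le_n by (simp add: f_def field_simps)
qed

lemma phi_Phi_map: "x \<in> On \<Longrightarrow> \<phi> (Phi_map n S x) = \<phi> x"
proof -
  assume x: "x \<in> On"
  have "\<phi> (Phi_map n S x) = (\<Sum>j=1..n. \<phi> (S j * x * adj (S j)))"
    unfolding Phi_map_def by (rule phi_sum) (use x in \<open>auto intro!: On_intros\<close>)
  also have "\<dots> = (\<Sum>j=1..n. \<phi> x / of_nat n)"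
    using x by (simp add: phi_conj_S)
  finally show ?thesis
    using two_le_n by simp
qed

lemma phi_mult_adj_S:
  assumes i: "i \<in> {1..n}" and a: "a \<in> On"
  shows "\<phi> (a * adj (S i)) = \<phi> (adj (S i) * a) / of_nat n"
proof -
  have "\<phi> (a * adj (S i)) = \<phi> (a * adj (S i) * (S i * adj (S i)))"
    using adj_S_mult_S[OF i] by (simp add: mult.assoc flip: mult.assoc[of "adj (S i)"])
  also have "\<dots> = \<phi> (S i * adj (S i) * (a * adj (S i)))"
    using i a word_mult_adj_word_mem_uhf[of "[i]" "[i]"]
    by (intro phi_commute) (auto intro!: On_intros)
  also have "\<dots> = \<phi> (S i * (adj (S i) * a) * adj (S i))"
    by (simp add: mult.assoc)
  finally show ?thesis
    using i a by (simp add: phi_conj_S On_intros)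
qed

lemma phi_adj_mult_Phi_map:
  assumes x: "x \<in> On" and y: "y \<in> On"
  shows "\<phi> (adj y * Phi_map n S x) = \<phi> (adj (Psi_map n S y) * x)"
proof -
  have mem: "adj (S i) * adj y * S i * x \<in> On" "adj y * S i * x * adj (S i) \<in> On" if "i \<in> {1..n}" for i
    using that x y by (auto intro!: On_intros)
  have "\<phi> (adj y * Phi_map n S x) = \<phi> (\<Sum>i=1..n. adj y * S i * x * adj (S i))"
    by (simp add: Phi_map_def sum_distrib_left mult.assoc)
  also have "\<dots> = (\<Sum>i=1..n. \<phi> (adj y * S i * x * adj (S i)))"
    by (rule phi_sum) (rule mem(2))
  also have "\<dots> = (\<Sum>i=1..n. \<phi> (adj (S i) * adj y * S i * x) / of_nat n)"
  proof (rule sum.cong[OF refl])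
    fix i assume i: "i \<in> {1..n}"
    have "\<phi> (adj y * S i * x * adj (S i)) = \<phi> (adj (S i) * (adj y * S i * x)) / of_nat n"
      using i x y by (intro phi_mult_adj_S On_intros)
    then show "\<phi> (adj y * S i * x * adj (S i)) = \<phi> (adj (S i) * adj y * S i * x) / of_nat n"
      by (simp add: mult.assoc)
  qed
  also have "\<dots> = \<phi> (cscale (1 / of_nat n) (\<Sum>i=1..n. adj (S i) * adj y * S i * x))"
  proof -
    have "(\<Sum>i=1..n. adj (S i) * adj y * S i * x) \<in> On"
      by (rule star_subalgebra_sum[OF star_subalgebra_On]) (rule mem(1))
    moreover have "\<phi> (\<Sum>i=1..n. adj (S i) * adj y * S i * x) = (\<Sum>i=1..n. \<phi> (adj (S i) * adj y * S i * x))"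
      by (rule phi_sum) (rule mem(1))
    ultimately show ?thesis
      by (simp add: phi_cscale sum_divide_distrib)
  qed
  also have "cscale (1 / of_nat n) (\<Sum>i=1..n. adj (S i) * adj y * S i * x) = adj (Psi_map n S y) * x"
    unfolding Psi_map_def
    by (simp add: adj_cscale adj_sum adj_mult adj_adj mult.assoc cscale_mult_left sum_distrib_right)
  finally show ?thesis .
qed

end

theorem mainTheorem5:
  fixes n :: nat and S :: "nat \<Rightarrow> 'a::cstar_algebra" and \<phi> :: "'a \<Rightarrow> complex"
  assumes "n \<ge> 2"
    and "cuntz_family n S"
    and "is_state_on (cuntz_alg n S) \<phi>"
    and "\<forall>a\<in>cuntz_alg n S. \<forall>b\<in>uhf_alg n S. \<phi> (a * b) = \<phi> (b * a)"
  shows "(\<forall>x\<in>cuntz_alg n S. \<phi> (Phi_map n S x) = \<phi> x)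
       \<and> (\<forall>x\<in>cuntz_alg n S. \<forall>y\<in>cuntz_alg n S.
            \<phi> (adj y * Phi_map n S x) = \<phi> (adj (Psi_map n S y) * x))"
proof -
  interpret cuntz_trace_state n S \<phi>
    using assms by unfold_locales
  show ?thesis
    by (simp add: phi_Phi_map phi_adj_mult_Phi_map)
qed

end
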